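(* Let $I$ be a finite set, $T$ a tree on $I$ with $n$ inner vertices, fix a nice total order on $\mathcal{V}(T)$ with associated edge-labeling $\lambda$, and let $m:\hat{0}=x_0\lhd x_1\lhd\dots\lhd x_n=T$ be the unique maximal chain of $[\hat{0},T]$ with increasing labels. For $i\in[n]$ let $\mathsf{A}_i=\{a \text{ atom}: a\le x_i,\ a\not\le x_{i-1}\}$ and $\mathsf{B}_i=\{a\text{ atom}: \lambda(\hat{0},a)=i\}$. Then $\mathsf{A}_i=\mathsf{B}_i$ for every $i\in[n]$.
   Context: A tree on a finite set $I$ is a (non-planar) rooted binary tree whose leaves are bijectively labeled by $I$: vertices are inner vertices (valence $3$) and leaves and the root (valence $1$), edges oriented towards the root; one-leaf trees are allowed. A forest on $I$ is a set of trees whose leaf sets partition $I$; $\mathcal{V}(F)$ is its set of inner vertices. For forests $F,G$ on $I$, $F \leq G$ if there is a continuous map $F\to G$ which (D1) is increasing with respect to orientation towards the root, (D2) maps inner vertices to inner vertices injectively, (D3) is the identity of $I$ on leaves, (D4) is injective on each tree of $F$. This gives the poset $\operatorname{For}(I)$, graded by number of inner vertices, with minimum $\hat{0}$ (no inner vertices); $[\hat{0},T]$ is a lattice. For $F \leq G \leq T$ inner vertices are regarded as subsets $\mathcal{V}(F)\subseteq\mathcal{V}(G)\subseteq\mathcal{V}(T)$; if $F\lhd G$ there is a unique $v$ with $\mathcal{V}(G)=\mathcal{V}(F)\cup\{v\}$. Partial order on $\mathcal{V}(T)$: $v\preceq v'$ if $v'$ lies on the path between the root and $v$. A nice total order is any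 total order on $\mathcal{V}(T)$ extending $\preceq$; using it the inner vertices are labeled $1,\dots,n$ increasingly and identified with their labels. The edge-labeling is $\lambda(F,G)$ := the unique element of $\mathcal{V}(G)\setminus\mathcal{V}(F)$ for $F\lhd G$ in $[\hat{0},T]$. Atoms are the elements covering $\hat{0}$. *)

theory Defs
  imports Main
begin

text \<open>A (non-planar, leaf-labelled, rooted binary) forest on a finite set I is
  encoded by the set of its vertices, each vertex being identified with the set of leaves
  below it (its cluster). Leaves are the singletons {x}, x in I; inner vertices are the
  clusters with at least two elements; each tree of the forest is a maximal cluster.
  For vertices v, w of a tree, w lies on the path from v to the root iff v is a subset of w.\<close>

definition forest :: "'a set \<Rightarrow> 'a set set \<Rightarrow> bool" where
  "forest I F \<longleftrightarrow>
     (\<forall>A\<in>F. A \<noteq> {} \<and> A \<subseteq> I) \<and>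
     (\<forall>x\<in>I. {x} \<in> F) \<and>
     (\<forall>A\<in>F. \<forall>B\<in>F. A \<subseteq> B \<or> B \<subseteq> A \<or> A \<inter> B = {}) \<and>
     (\<forall>A\<in>F. 2 \<le> card A \<longrightarrow>
        (\<exists>B1\<in>F. \<exists>B2\<in>F. B1 \<noteq> {} \<and> B2 \<noteq> {} \<and> B1 \<inter> B2 = {} \<and> B1 \<union> B2 = A))"

definition is_tree :: "'a set \<Rightarrow> 'a set set \<Rightarrow> bool" where
  "is_tree I T \<longleftrightarrow> forest I T \<and> I \<in> T"

definition inner :: "'a set set \<Rightarrow> 'a set set" where
  "inner F = {A\<in>F. 2 \<le> card A}"

text \<open>Combinatorial data of a map F \<rightarrow> G satisfying (D1)-(D4): phi sends vertices of F to
  vertices of G (each edge then goes to the unique monotone path between the images),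
  (D1) increasing towards the root, (D2) inner vertices to inner vertices injectively,
  (D3) identity on leaves, (D4) injective on each tree: the images of the two children
  of an inner vertex A lie in different branches below phi A, i.e. phi A is the smallest
  vertex of G above both of them.\<close>
definition morph :: "'a set set \<Rightarrow> 'a set set \<Rightarrow> ('a set \<Rightarrow> 'a set) \<Rightarrow> bool" where
  "morph F G \<phi> \<longleftrightarrow>
     (\<forall>A\<in>F. \<phi> A \<in> G) \<and>
     (\<forall>A\<in>F. \<forall>B\<in>F. A \<subseteq> B \<longrightarrow> \<phi> A \<subseteq> \<phi> B) \<and>
     (\<forall>A\<in>inner F. \<phi> A \<in> inner G) \<and> inj_on \<phi> (inner F) \<and>
     (\<forall>A\<in>F. card A = 1 \<longrightarrow> \<phi> A = A) \<and>
     (\<forall>A\<in>F. \<forall>B1\<in>F. \<forall>B2\<in>F.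
        B1 \<noteq> {} \<and> B2 \<noteq> {} \<and> B1 \<inter> B2 = {} \<and> B1 \<union> B2 = A \<longrightarrow>
        (\<forall>C\<in>G. \<phi> B1 \<union> \<phi> B2 \<subseteq> C \<longrightarrow> \<phi> A \<subseteq> C))"

definition leq :: "'a set \<Rightarrow> 'a set set \<Rightarrow> 'a set set \<Rightarrow> bool" where
  "leq I F G \<longleftrightarrow> forest I F \<and> forest I G \<and> (\<exists>\<phi>. morph F G \<phi>)"

definition covers :: "'a set \<Rightarrow> 'a set set \<Rightarrow> 'a set set \<Rightarrow> bool" where
  "covers I F G \<longleftrightarrow> leq I F G \<and> F \<noteq> G \<and>
     \<not> (\<exists>H. leq I F H \<and> leq I H G \<and> H \<noteq> F \<and> H \<noteq> G)"

definition zero :: "'a set \<Rightarrow> 'a set set" where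
  "zero I = {{x} | x. x \<in> I}"

definition atom :: "'a set \<Rightarrow> 'a set set \<Rightarrow> bool" where
  "atom I a \<longleftrightarrow> covers I (zero I) a"

text \<open>For F \<le> T, the inner vertices of F regarded as a subset of the inner vertices of T
  (images under the map F \<rightarrow> T).\<close>
definition vin :: "'a set set \<Rightarrow> 'a set set \<Rightarrow> 'a set set" where
  "vin T F = (SOME V. \<exists>\<phi>. morph F T \<phi> \<and> V = \<phi> ` inner F)"

text \<open>Nice total order on the inner vertices of T, given as the increasing labelling
  by 1..n: it extends the order v \<preceq> v' (v' on the path from the root to v).\<close>
definition nice_order :: "'a set set \<Rightarrow> ('a set \<Rightarrow> nat) \<Rightarrow> bool" where
  "nice_order T lbl \<longleftrightarrow> bij_betw lbl (inner T) {1..card (inner T)} \<and>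
     (\<forall>v\<in>inner T. \<forall>w\<in>inner T. v \<subseteq> w \<longrightarrow> lbl v \<le> lbl w)"

definition lam :: "'a set set \<Rightarrow> ('a set \<Rightarrow> nat) \<Rightarrow> 'a set set \<Rightarrow> 'a set set \<Rightarrow> nat" where
  "lam T lbl F G = lbl (THE v. vin T G - vin T F = {v})"

end

theory Submission
  imports Defs
begin

text \<open>
  A map F \<rightarrow> G satisfying (D1)-(D4) is forced to send each vertex to the least vertex of G above
  it, so F \<le> T determines the set of inner vertices of T realised by F. Along the chain
  x 0 \<lhd> \<dots> \<lhd> x n = T these sets grow by exactly one vertex per step (the number of inner
  vertices strictly increases from 0 to n), and since the labels of the steps are strictly
  increasing in {1..n}, step i adds the vertex labelled i. By a counting argument a forest below T
  actually contains every inner vertex of T all of whose descendants it realises; as a nice order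
  makes {w. lbl w \<le> i} closed under descendants, x i contains all these vertices.
  The atoms are the cherries joining two leaves u, v, and such a cherry lies below a forest iff
  some vertex of the forest contains u and v. Hence the cherry at u, v first lies below x i for
  i the label of the lowest common ancestor of u and v in T, which is also its label \<lambda>(0, cherry).
\<close>

section \<open>Forests and their morphisms\<close>

definition bipartition :: "'a set \<Rightarrow> 'a set \<Rightarrow> 'a set \<Rightarrow> bool" where
  "bipartition A B1 B2 \<longleftrightarrow> B1 \<noteq> {} \<and> B2 \<noteq> {} \<and> B1 \<inter> B2 = {} \<and> B1 \<union> B2 = A"

lemma bipartition_commute: "bipartition A B1 B2 \<longleftrightarrow> bipartition A B2 B1"
  unfolding bipartition_def by blast

lemma two_le_card: "finite A \<Longrightarrow> u \<in> A \<Longrightarrow> v \<in> A \<Longrightarrow> u \<noteq> v \<Longrightarrow> 2 \<le> card A"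
  using card_mono[of A "{u, v}"] by simp

lemma bipartition_card_less: "finite A \<Longrightarrow> bipartition A B1 B2 \<Longrightarrow> card B1 < card A"
  unfolding bipartition_def by (intro psubset_card_mono) blast+

lemma bipartition_two_le_card:
  assumes "finite A" "bipartition A B1 B2"
  shows "2 \<le> card A"
proof -
  obtain b1 b2 where "b1 \<in> B1" "b2 \<in> B2" using assms(2) unfolding bipartition_def by blast
  then show ?thesis using two_le_card[OF assms(1), of b1 b2] assms(2) unfolding bipartition_def by blast
qed

lemma forest_nonempty: "forest I F \<Longrightarrow> A \<in> F \<Longrightarrow> A \<noteq> {}"
  unfolding forest_def by (drule conjunct1) blast

lemma forest_subset: "forest I F \<Longrightarrow> A \<in> F \<Longrightarrow> A \<subseteq> I"
  unfolding forest_def by (drule conjunct1) blast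

lemma forest_singleton: "forest I F \<Longrightarrow> x \<in> I \<Longrightarrow> {x} \<in> F"
  unfolding forest_def by (drule conjunct2, drule conjunct1) blast

lemma forest_laminar: "forest I F \<Longrightarrow> A \<in> F \<Longrightarrow> B \<in> F \<Longrightarrow> A \<subseteq> B \<or> B \<subseteq> A \<or> A \<inter> B = {}"
  unfolding forest_def by (drule conjunct2, drule conjunct2, drule conjunct1) blast

lemma forest_childrenE:
  assumes "forest I F" "A \<in> F" "2 \<le> card A"
  obtains B1 B2 where "B1 \<in> F" "B2 \<in> F" "bipartition A B1 B2"
proof -
  have "\<forall>A\<in>F. 2 \<le> card A \<longrightarrow> (\<exists>B1\<in>F. \<exists>B2\<in>F. bipartition A B1 B2)"
    using assms(1) unfolding forest_def bipartition_def by (elim conjE)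
  then show thesis using that assms(2,3) by blast
qed

lemma finite_forest: "finite I \<Longrightarrow> forest I F \<Longrightarrow> finite F"
  by (rule finite_subset[of F "Pow I"]) (auto dest: forest_subset)

lemma finite_forest_mem: "finite I \<Longrightarrow> forest I F \<Longrightarrow> A \<in> F \<Longrightarrow> finite A"
  by (metis finite_subset forest_subset)

lemma inner_iff: "A \<in> inner F \<longleftrightarrow> A \<in> F \<and> 2 \<le> card A"
  unfolding inner_def by simp

lemma finite_inner: "finite I \<Longrightarrow> forest I F \<Longrightarrow> finite (inner F)"
  using finite_forest[of I F] unfolding inner_def by auto

lemma forest_leafE:
  assumes "finite I" "forest I F" "A \<in> F" "\<not> 2 \<le> card A"
  obtains y where "y \<in> I" "A = {y}"
proof -
  have "finite A" "A \<noteq> {}"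
    using finite_forest_mem[OF assms(1-3)] forest_nonempty[OF assms(2,3)] by auto
  then have "card A \<noteq> 0" by simp
  then have "card A = 1" using assms(4) by linarith
  then obtain y where "A = {y}" by (rule card_1_singletonE)
  then show thesis using that forest_subset[OF assms(2,3)] by blast
qed

lemma zero_forest: "forest I (zero I)"
  unfolding forest_def zero_def by auto

lemma inner_zero: "inner (zero I) = {}"
  unfolding inner_def zero_def by auto

lemma zero_subset_forest: "forest I F \<Longrightarrow> zero I \<subseteq> F"
  unfolding zero_def by (auto intro: forest_singleton)

lemma forest_eq_zero_Un_inner:
  assumes "finite I" "forest I F"
  shows "F = zero I \<union> inner F"
proof (intro equalityI subsetI)
  fix A assume A: "A \<in> F"
  show "A \<in> zero I \<union> inner F"
  proof (cases "2 \<le> card A")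
    case True
    then show ?thesis using A by (simp add: inner_iff)
  next
    case False
    then obtain y where "y \<in> I" "A = {y}" by (rule forest_leafE[OF assms A])
    then show ?thesis unfolding zero_def by blast
  qed
next
  fix A assume "A \<in> zero I \<union> inner F"
  then show "A \<in> F" using zero_subset_forest[OF assms(2)] by (auto simp: inner_iff)
qed

lemma morph_mem: "morph F G \<phi> \<Longrightarrow> A \<in> F \<Longrightarrow> \<phi> A \<in> G"
  unfolding morph_def by (drule conjunct1) blast

lemma morph_mono: "morph F G \<phi> \<Longrightarrow> A \<in> F \<Longrightarrow> B \<in> F \<Longrightarrow> A \<subseteq> B \<Longrightarrow> \<phi> A \<subseteq> \<phi> B"
  unfolding morph_def by (drule conjunct2, drule conjunct1) blast

lemma morph_inner: "morph F G \<phi> \<Longrightarrow> A \<in> inner F \<Longrightarrow> \<phi> A \<in> inner G"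
  unfolding morph_def by (drule conjunct2, drule conjunct2, drule conjunct1) blast

lemma morph_inj_on_inner: "morph F G \<phi> \<Longrightarrow> inj_on \<phi> (inner F)"
  unfolding morph_def by (drule conjunct2, drule conjunct2, drule conjunct2, drule conjunct1)

lemma morph_leaf: "morph F G \<phi> \<Longrightarrow> A \<in> F \<Longrightarrow> card A = 1 \<Longrightarrow> \<phi> A = A"
  unfolding morph_def by (drule conjunct2, drule conjunct2, drule conjunct2, drule conjunct2,
      drule conjunct1) blast

lemma morph_children:
  assumes "morph F G \<phi>" "A \<in> F" "B1 \<in> F" "B2 \<in> F" "bipartition A B1 B2"
    and "C \<in> G" "\<phi> B1 \<union> \<phi> B2 \<subseteq> C"
  shows "\<phi> A \<subseteq> C"
proof -
  have "\<forall>A\<in>F. \<forall>B1\<in>F. \<forall>B2\<in>F. bipartition A B1 B2 \<longrightarrow> (\<forall>C\<in>G. \<phi> B1 \<union> \<phi> B2 \<subseteq> C \<longrightarrow> \<phi> A \<subseteq> C)"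
    using assms(1) unfolding morph_def bipartition_def by (elim conjE)
  then show ?thesis using assms(2-7) by blast
qed

lemma morph_id: "F \<subseteq> G \<Longrightarrow> morph F G id"
  unfolding morph_def inner_def by auto

lemma morph_subset:
  assumes "forest I F" "morph F G \<phi>" "A \<in> F"
  shows "A \<subseteq> \<phi> A"
proof
  fix y assume "y \<in> A"
  then have leaf: "{y} \<in> F" using forest_singleton[OF assms(1)] forest_subset[OF assms(1,3)] by blast
  then have "\<phi> {y} = {y}" using morph_leaf[OF assms(2)] by simp
  then show "y \<in> \<phi> A" using morph_mono[OF assms(2) leaf assms(3)] \<open>y \<in> A\<close> by blast
qed

lemma morph_least:
  assumes "finite I" "forest I F" "morph F G \<phi>" "A \<in> F" "C \<in> G" "A \<subseteq> C"
  shows "\<phi> A \<subseteq> C"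
  using assms(4,6)
proof (induction "card A" arbitrary: A rule: less_induct)
  case less
  show ?case
  proof (cases "2 \<le> card A")
    case True
    then obtain B1 B2 where B: "B1 \<in> F" "B2 \<in> F" "bipartition A B1 B2"
      using forest_childrenE[OF assms(2) less.prems(1)] by blast
    have "finite A" using finite_forest_mem[OF assms(1,2) less.prems(1)] .
    then have "card B1 < card A" "card B2 < card A"
      using B(3) bipartition_card_less bipartition_commute by blast+
    moreover have "B1 \<subseteq> C" "B2 \<subseteq> C" using B(3) less.prems(2) unfolding bipartition_def by auto
    ultimately have "\<phi> B1 \<subseteq> C" "\<phi> B2 \<subseteq> C" using less.hyps B(1,2) by auto
    then show ?thesis using morph_children[OF assms(3) less.prems(1) B assms(5)] by blast
  next
    case False
    then obtain y where "A = {y}" using forest_leafE[OF assms(1,2) less.prems(1)] by blast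
    then show ?thesis using morph_leaf[OF assms(3) less.prems(1)] less.prems(2) by simp
  qed
qed

text \<open>For X = {u, v} in a tree this is the lowest common ancestor of the leaves u and v.\<close>

definition least_cluster :: "'a set set \<Rightarrow> 'a set \<Rightarrow> 'a set" where
  "least_cluster G X = \<Inter>{C \<in> G. X \<subseteq> C}"

lemma subset_least_cluster: "X \<subseteq> least_cluster G X"
  unfolding least_cluster_def by blast

lemma least_cluster_least: "C \<in> G \<Longrightarrow> X \<subseteq> C \<Longrightarrow> least_cluster G X \<subseteq> C"
  unfolding least_cluster_def by blast

lemma least_cluster_mono: "X \<subseteq> Y \<Longrightarrow> least_cluster G X \<subseteq> least_cluster G Y"
  unfolding least_cluster_def by blast

lemma least_cluster_eq: "X \<in> G \<Longrightarrow> least_cluster G X = X"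
  by (simp add: least_cluster_least subset_antisym subset_least_cluster)

lemma least_cluster_mem:
  assumes "finite I" "forest I G" "X \<noteq> {}" "C \<in> G" "X \<subseteq> C"
  shows "least_cluster G X \<in> G"
proof -
  have "subset.chain G {C \<in> G. X \<subseteq> C}"
    using forest_laminar[OF assms(2)] assms(3) unfolding subset_chain_def by blast
  moreover have "finite {C \<in> G. X \<subseteq> C}" using finite_forest[OF assms(1,2)] by simp
  ultimately show ?thesis
    unfolding least_cluster_def using Inter_in_chain assms(4,5) by blast
qed

lemma least_cluster_pair_inner:
  assumes "finite I" "forest I G" "C \<in> G" "{u, v} \<subseteq> C" "u \<noteq> v"
  shows "least_cluster G {u, v} \<in> inner G"
proof -
  have mem: "least_cluster G {u, v} \<in> G" using least_cluster_mem[OF assms(1,2) _ assms(3,4)] by blast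
  moreover have "{u, v} \<subseteq> least_cluster G {u, v}" by (rule subset_least_cluster)
  ultimately show ?thesis
    using two_le_card[OF finite_forest_mem[OF assms(1,2) mem]] assms(5) inner_iff by blast
qed

lemma morph_eq_least_cluster:
  assumes "finite I" "forest I F" "morph F G \<phi>" "A \<in> F"
  shows "\<phi> A = least_cluster G A"
proof (rule antisym)
  show "\<phi> A \<subseteq> least_cluster G A"
    unfolding least_cluster_def using morph_least[OF assms] by blast
  show "least_cluster G A \<subseteq> \<phi> A"
    using least_cluster_least[OF morph_mem[OF assms(3,4)] morph_subset[OF assms(2-4)]] .
qed

section \<open>Composition of morphisms\<close>

lemma morph_children_disjoint:
  assumes "finite I" "forest I G" "forest I T" "morph G T \<phi>"
    and "E \<in> G" "E1 \<in> G" "E2 \<in> G" "bipartition E E1 E2"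
  shows "\<phi> E1 \<inter> \<phi> E2 = {}"
proof -
  have not_subset: "\<not> \<phi> Y \<subseteq> \<phi> Z" if Y: "Y \<in> G" and Z: "Z \<in> G" and YZ: "bipartition E Y Z" for Y Z
  proof
    assume "\<phi> Y \<subseteq> \<phi> Z"
    then have "\<phi> E \<subseteq> \<phi> Z"
      using morph_children[OF assms(4,5) Y Z YZ morph_mem[OF assms(4) Z]] by blast
    moreover have "\<phi> Z \<subseteq> \<phi> E"
      using morph_mono[OF assms(4) Z assms(5)] YZ unfolding bipartition_def by blast
    ultimately have same_image: "\<phi> E = \<phi> Z" by blast
    have "E \<subseteq> Z"
    proof (cases "2 \<le> card Z")
      case True
      have "2 \<le> card E" using bipartition_two_le_card[OF finite_forest_mem[OF assms(1,2,5)] YZ] .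
      then have "E \<in> inner G" "Z \<in> inner G" using True assms(5) Z by (simp_all add: inner_iff)
      then show ?thesis using inj_onD[OF morph_inj_on_inner[OF assms(4)] same_image] by blast
    next
      case False
      then obtain z where "Z = {z}" using forest_leafE[OF assms(1,2) Z] by blast
      then have "\<phi> Z = Z" using morph_leaf[OF assms(4) Z] by simp
      then show ?thesis using morph_subset[OF assms(2,4,5)] same_image by simp
    qed
    then show False using YZ unfolding bipartition_def by blast
  qed
  have "\<not> \<phi> E1 \<subseteq> \<phi> E2" "\<not> \<phi> E2 \<subseteq> \<phi> E1"
    using not_subset assms(6-8) bipartition_commute by blast+
  then show ?thesis
    using forest_laminar[OF assms(3) morph_mem[OF assms(4,6)] morph_mem[OF assms(4,7)]] by blast
qed

lemma morph_below_meeting_cluster: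
  assumes "finite I" "forest I G" "forest I T" "morph G T \<phi>"
    and "E \<in> G" "E1 \<in> G" "E2 \<in> G" "bipartition E E1 E2"
    and "K \<in> T" "K \<inter> E1 \<noteq> {}" "K \<inter> E2 \<noteq> {}"
  shows "\<phi> E \<subseteq> K"
proof -
  have disjoint: "\<phi> E1 \<inter> \<phi> E2 = {}" by (rule morph_children_disjoint[OF assms(1-8)])
  have "E1 \<subseteq> \<phi> E1" "E2 \<subseteq> \<phi> E2" using morph_subset[OF assms(2,4)] assms(6,7) by auto
  then have "K \<inter> \<phi> E1 \<noteq> {}" "K \<inter> \<phi> E2 \<noteq> {}" "\<not> K \<subseteq> \<phi> E1" "\<not> K \<subseteq> \<phi> E2"
    using assms(10,11) disjoint by blast+
  then have "\<phi> E1 \<subseteq> K" "\<phi> E2 \<subseteq> K"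
    using forest_laminar[OF assms(3,9)] morph_mem[OF assms(4)] assms(6,7) by blast+
  then show ?thesis using morph_children[OF assms(4-8) assms(9)] by blast
qed

lemma morph_comp_least:
  assumes "finite I" "forest I F" "forest I G" "forest I T" "morph F G \<phi>" "morph G T \<psi>"
    and "A \<in> inner F" "C \<in> T" "A \<subseteq> C"
  shows "\<psi> (\<phi> A) \<subseteq> C"
proof -
  have A: "A \<in> F" using assms(7) by (simp add: inner_iff)
  have "\<phi> A \<in> inner G" by (rule morph_inner[OF assms(5,7)])
  then obtain E1 E2 where E: "E1 \<in> G" "E2 \<in> G" "bipartition (\<phi> A) E1 E2"
    using forest_childrenE[OF assms(3)] by (auto simp: inner_iff)
  txt \<open>A meets both children of \<phi> A in G (it cannot lie inside one of them, as \<phi> A is the least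
    vertex above A), hence so does C, and C then lies above \<psi> (\<phi> A).\<close>
  have not_inside: "\<not> A \<subseteq> Y" if "Y \<in> G" "bipartition (\<phi> A) Y Z" for Y Z
  proof
    assume "A \<subseteq> Y"
    then have "\<phi> A \<subseteq> Y" by (rule morph_least[OF assms(1,2,5) A that(1)])
    then show False using that(2) unfolding bipartition_def by blast
  qed
  have "\<not> A \<subseteq> E1" "\<not> A \<subseteq> E2"
    using not_inside[OF E(1,3)] not_inside[OF E(2)] E(3) by (auto simp: bipartition_commute)
  moreover have "A \<subseteq> E1 \<union> E2"
    using morph_subset[OF assms(2,5) A] E(3) unfolding bipartition_def by blast
  ultimately have "A \<inter> E1 \<noteq> {}" "A \<inter> E2 \<noteq> {}" by blast+
  then have "C \<inter> E1 \<noteq> {}" "C \<inter> E2 \<noteq> {}" using assms(9) by blast+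
  then show ?thesis
    using morph_below_meeting_cluster[OF assms(1,3,4,6) morph_mem[OF assms(5) A] E assms(8)] by blast
qed

lemma morph_comp:
  assumes "finite I" "forest I F" "forest I G" "forest I T" "morph F G \<phi>" "morph G T \<psi>"
  shows "morph F T (\<psi> \<circ> \<phi>)"
  unfolding morph_def
proof (intro conjI ballI impI allI)
  fix A assume "A \<in> F"
  then show "(\<psi> \<circ> \<phi>) A \<in> T" using morph_mem[OF assms(6) morph_mem[OF assms(5)]] by simp
next
  fix A B assume "A \<in> F" "B \<in> F" "A \<subseteq> B"
  then show "(\<psi> \<circ> \<phi>) A \<subseteq> (\<psi> \<circ> \<phi>) B"
    using morph_mono[OF assms(6) morph_mem[OF assms(5)] morph_mem[OF assms(5)] morph_mono[OF assms(5)]]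
    by simp
next
  fix A assume "A \<in> inner F"
  then show "(\<psi> \<circ> \<phi>) A \<in> inner T" using morph_inner[OF assms(6) morph_inner[OF assms(5)]] by simp
next
  have "inj_on \<psi> (\<phi> ` inner F)"
    by (rule inj_on_subset[OF morph_inj_on_inner[OF assms(6)]]) (use morph_inner[OF assms(5)] in blast)
  then show "inj_on (\<psi> \<circ> \<phi>) (inner F)" by (rule comp_inj_on[OF morph_inj_on_inner[OF assms(5)]])
next
  fix A assume A: "A \<in> F" "card A = 1"
  then have "\<phi> A = A" by (rule morph_leaf[OF assms(5)])
  moreover have "A \<in> G" using morph_mem[OF assms(5) A(1)] calculation by simp
  ultimately show "(\<psi> \<circ> \<phi>) A = A" using morph_leaf[OF assms(6) _ A(2)] by simp
next
  fix A B1 B2 C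
  assume A: "A \<in> F" "B1 \<in> F" "B2 \<in> F" "B1 \<noteq> {} \<and> B2 \<noteq> {} \<and> B1 \<inter> B2 = {} \<and> B1 \<union> B2 = A"
    and C: "C \<in> T" "(\<psi> \<circ> \<phi>) B1 \<union> (\<psi> \<circ> \<phi>) B2 \<subseteq> C"
  have "2 \<le> card A"
    using bipartition_two_le_card[OF finite_forest_mem[OF assms(1,2) A(1)]] A(4)
    unfolding bipartition_def by blast
  then have "A \<in> inner F" using A(1) by (simp add: inner_iff)
  moreover have "B \<subseteq> \<psi> (\<phi> B)" if "B \<in> F" for B
    using morph_subset[OF assms(2,5) that] morph_subset[OF assms(3,6) morph_mem[OF assms(5) that]]
    by blast
  then have "A \<subseteq> C" using A C(2) by auto
  ultimately show "(\<psi> \<circ> \<phi>) A \<subseteq> C" using morph_comp_least[OF assms _ C(1)] by simp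
qed

lemma leq_trans:
  assumes "finite I" "leq I F G" "leq I G T"
  shows "leq I F T"
proof -
  obtain \<phi> \<psi> where "forest I F" "forest I G" "forest I T" "morph F G \<phi>" "morph G T \<psi>"
    using assms(2,3) unfolding leq_def by blast
  then show ?thesis unfolding leq_def using morph_comp[OF assms(1)] by blast
qed

lemma vin_eq:
  assumes "finite I" "forest I F" "morph F T \<phi>"
  shows "vin T F = \<phi> ` inner F"
proof -
  have "\<exists>\<psi>. morph F T \<psi> \<and> vin T F = \<psi> ` inner F"
    unfolding vin_def by (rule someI_ex) (use assms(3) in blast)
  then obtain \<psi> where \<psi>: "morph F T \<psi>" "vin T F = \<psi> ` inner F" by blast
  have "\<psi> A = \<phi> A" if "A \<in> inner F" for A
    using morph_eq_least_cluster[OF assms(1,2) \<psi>(1)] morph_eq_least_cluster[OF assms(1-3)] that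
    by (simp add: inner_iff)
  then show ?thesis using \<psi>(2) by simp
qed

lemma vin_subset_inner_card:
  assumes "finite I" "leq I F T"
  shows "vin T F \<subseteq> inner T" and "card (vin T F) = card (inner F)"
proof -
  obtain \<phi> where F: "forest I F" and \<phi>: "morph F T \<phi>" using assms(2) unfolding leq_def by blast
  show "vin T F \<subseteq> inner T" using vin_eq[OF assms(1) F \<phi>] morph_inner[OF \<phi>] by auto
  show "card (vin T F) = card (inner F)"
    using vin_eq[OF assms(1) F \<phi>] card_image[OF morph_inj_on_inner[OF \<phi>]] by simp
qed

lemma vin_mono:
  assumes "finite I" "leq I F G" "leq I G T"
  shows "vin T F \<subseteq> vin T G"
proof -
  obtain \<phi> \<psi> where F: "forest I F" and G: "forest I G" and T: "forest I T"
    and \<phi>: "morph F G \<phi>" and \<psi>: "morph G T \<psi>"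
    using assms(2,3) unfolding leq_def by blast
  have "vin T F = (\<psi> \<circ> \<phi>) ` inner F" by (rule vin_eq[OF assms(1) F morph_comp[OF assms(1) F G T \<phi> \<psi>]])
  also have "\<dots> \<subseteq> \<psi> ` inner G" using morph_inner[OF \<phi>] by auto
  also have "\<dots> = vin T G" by (rule vin_eq[OF assms(1) G \<psi>, symmetric])
  finally show ?thesis .
qed

lemma vin_zero: "finite I \<Longrightarrow> forest I T \<Longrightarrow> vin T (zero I) = {}"
  using vin_eq[OF _ zero_forest morph_id[OF zero_subset_forest]] by (simp add: inner_zero)

section \<open>Counting inner vertices\<close>

definition inner_below :: "'a set set \<Rightarrow> 'a set \<Rightarrow> 'a set set" where
  "inner_below F S = {A \<in> inner F. A \<subseteq> S}"

lemma finite_inner_below: "finite I \<Longrightarrow> forest I F \<Longrightarrow> finite (inner_below F S)"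
  unfolding inner_below_def using finite_inner[of I F] by simp

lemma inner_below_disjoint:
  "forest I F \<Longrightarrow> S1 \<inter> S2 = {} \<Longrightarrow> inner_below F S1 \<inter> inner_below F S2 = {}"
  unfolding inner_below_def inner_iff using forest_nonempty by blast

lemma inner_below_children:
  assumes "finite I" "forest I F" "C \<in> F" "B1 \<in> F" "B2 \<in> F" "bipartition C B1 B2"
  shows "inner_below F C = insert C (inner_below F B1 \<union> inner_below F B2)"
proof (intro equalityI subsetI)
  fix D assume D: "D \<in> inner_below F C"
  then have "D \<in> F" "D \<subseteq> C" unfolding inner_below_def inner_iff by auto
  then have "D = C \<or> D \<subseteq> B1 \<or> D \<subseteq> B2"
    using forest_laminar[OF assms(2) \<open>D \<in> F\<close> assms(4)] forest_laminar[OF assms(2) \<open>D \<in> F\<close> assms(5)]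
      assms(6) unfolding bipartition_def by blast
  then show "D \<in> insert C (inner_below F B1 \<union> inner_below F B2)"
    using D unfolding inner_below_def by blast
next
  have "2 \<le> card C" using bipartition_two_le_card[OF finite_forest_mem[OF assms(1-3)] assms(6)] .
  then have "C \<in> inner_below F C" using assms(3) unfolding inner_below_def inner_iff by simp
  moreover have "inner_below F B1 \<union> inner_below F B2 \<subseteq> inner_below F C"
    using assms(6) unfolding inner_below_def bipartition_def by blast
  ultimately show "D \<in> inner_below F C" if "D \<in> insert C (inner_below F B1 \<union> inner_below F B2)" for D
    using that by blast
qed

lemma card_inner_below_cluster:
  assumes "finite I" "forest I F" "C \<in> F"
  shows "card (inner_below F C) + 1 = card C"
  using assms(3)
proof (induction "card C" arbitrary: C rule: less_induct)
  case less
  have "finite C" using finite_forest_mem[OF assms(1,2) less.prems] .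
  show ?case
  proof (cases "2 \<le> card C")
    case True
    then obtain B1 B2 where B: "B1 \<in> F" "B2 \<in> F" "bipartition C B1 B2"
      using forest_childrenE[OF assms(2) less.prems] by blast
    have card_B: "card B1 < card C" "card B2 < card C"
      using bipartition_card_less[OF \<open>finite C\<close>] B(3) bipartition_commute by blast+
    have "card C = card B1 + card B2"
      using B(3) \<open>finite C\<close> card_Un_disjoint[of B1 B2] unfolding bipartition_def by auto
    moreover have "C \<notin> inner_below F B1 \<union> inner_below F B2"
      using B(3) unfolding inner_below_def bipartition_def by blast
    moreover have "inner_below F B1 \<inter> inner_below F B2 = {}"
      using inner_below_disjoint[OF assms(2)] B(3) unfolding bipartition_def by blast
    ultimately show ?thesis
      using inner_below_children[OF assms(1,2) less.prems B] less.hyps[OF card_B(1) B(1)]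
        less.hyps[OF card_B(2) B(2)] finite_inner_below[OF assms(1,2)]
      by (simp add: card_Un_disjoint)
  next
    case False
    then obtain y where "C = {y}" using forest_leafE[OF assms(1,2) less.prems] by blast
    moreover have "\<not> 2 \<le> card A" if "A \<subseteq> {y}" for A :: "'a set"
      using card_mono[OF _ that] by simp
    ultimately have "inner_below F C = {}" unfolding inner_below_def inner_iff by blast
    then show ?thesis using \<open>C = {y}\<close> by simp
  qed
qed

lemma inner_below_split_maximal:
  assumes "forest I F" "A \<in> F" "A \<subseteq> S" "finite S"
    and maximal: "\<And>B. B \<in> F \<Longrightarrow> B \<subseteq> S \<Longrightarrow> card B \<le> card A"
  shows "inner_below F S = inner_below F A \<union> inner_below F (S - A)"
proof -
  have "B \<subseteq> A \<or> B \<subseteq> S - A" if B: "B \<in> F" "B \<subseteq> S" for B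
  proof -
    have "finite B" using finite_subset[OF B(2) assms(4)] .
    have "A = B" if "A \<subseteq> B"
    proof -
      have "card A = card B" using card_mono[OF \<open>finite B\<close> that] maximal[OF B] by simp
      then show ?thesis using card_subset_eq[OF \<open>finite B\<close> that] by simp
    qed
    then show ?thesis using forest_laminar[OF assms(1) B(1) assms(2)] B(2) by blast
  qed
  then show ?thesis using assms(3) unfolding inner_below_def inner_iff by blast
qed

lemma card_inner_below_bound:
  assumes "finite I" "forest I F" "S \<subseteq> I" "S \<noteq> {}"
  shows "card (inner_below F S) < card S \<and> (S \<notin> F \<longrightarrow> card (inner_below F S) + 2 \<le> card S)"
  using assms(3,4)
proof (induction "card S" arbitrary: S rule: less_induct)
  case less
  have "finite S" using assms(1) less.prems(1) by (rule finite_subset[rotated])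
  obtain s where "s \<in> S" using less.prems(2) by blast
  then have "{s} \<in> F \<and> {s} \<subseteq> S" using forest_singleton[OF assms(2)] less.prems(1) by blast
  moreover have "\<forall>B. B \<in> F \<and> B \<subseteq> S \<longrightarrow> card B < Suc (card S)"
    using card_mono[OF \<open>finite S\<close>] by (simp add: less_Suc_eq_le)
  ultimately have "\<exists>A. (A \<in> F \<and> A \<subseteq> S) \<and> (\<forall>B. B \<in> F \<and> B \<subseteq> S \<longrightarrow> card B \<le> card A)"
    by (rule Lattices_Big.ex_has_greatest_nat)
  then obtain A where A: "A \<in> F" "A \<subseteq> S"
    and maximal: "\<And>B. B \<in> F \<Longrightarrow> B \<subseteq> S \<Longrightarrow> card B \<le> card A"
    by blast
  have card_A: "card (inner_below F A) + 1 = card A" by (rule card_inner_below_cluster[OF assms(1,2) A(1)])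
  show ?case
  proof (cases "A = S")
    case True
    then show ?thesis using card_A A(1) by simp
  next
    case False
    have "inner_below F S = inner_below F A \<union> inner_below F (S - A)"
      by (rule inner_below_split_maximal[OF assms(2) A \<open>finite S\<close> maximal])
    moreover have "inner_below F A \<inter> inner_below F (S - A) = {}"
      by (rule inner_below_disjoint[OF assms(2)]) blast
    ultimately have card_S: "card (inner_below F S) = card (inner_below F A) + card (inner_below F (S - A))"
      by (simp add: card_Un_disjoint finite_inner_below[OF assms(1,2)])
    have "card S = card A + card (S - A)"
      using card_Diff_subset[OF finite_subset[OF A(2) \<open>finite S\<close>] A(2)] card_mono[OF \<open>finite S\<close> A(2)]
      by simp
    moreover have "card A \<noteq> 0"
      using forest_nonempty[OF assms(2) A(1)] finite_subset[OF A(2) \<open>finite S\<close>] by simp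
    moreover have "S - A \<noteq> {}" using False A(2) by blast
    ultimately have "card (inner_below F (S - A)) < card (S - A)"
      using less.hyps[of "S - A"] less.prems(1) by auto
    then show ?thesis using card_S card_A \<open>card S = card A + card (S - A)\<close> by simp
  qed
qed

lemma morph_reflects_cluster:
  assumes "finite I" "forest I F" "forest I G" "morph F G \<phi>"
    and "D \<in> G" "inner_below G D \<subseteq> \<phi> ` inner F"
  shows "D \<in> F"
proof (rule ccontr)
  txt \<open>\<phi> maps the inner vertices of F it sends below D bijectively onto the card D - 1 inner
    vertices of G below D; but if D is not a vertex of F, at most card D - 2 inner vertices of F
    lie below D.\<close>
  assume "D \<notin> F"
  let ?S = "{A \<in> inner F. \<phi> A \<subseteq> D}"
  have "\<phi> ` ?S = inner_below G D"
    using assms(6) morph_inner[OF assms(4)] unfolding inner_below_def by blast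
  moreover have "inj_on \<phi> ?S" by (rule inj_on_subset[OF morph_inj_on_inner[OF assms(4)]]) blast
  ultimately have "card ?S = card (inner_below G D)" using card_image by fastforce
  then have "card ?S + 1 = card D" using card_inner_below_cluster[OF assms(1,3,5)] by simp
  moreover have "?S \<subseteq> inner_below F D"
    using morph_subset[OF assms(2,4)] unfolding inner_below_def inner_iff by blast
  then have "card ?S \<le> card (inner_below F D)"
    by (rule card_mono[OF finite_inner_below[OF assms(1,2)]])
  moreover have "card (inner_below F D) + 2 \<le> card D"
    using card_inner_below_bound[OF assms(1,2) forest_subset[OF assms(3,5)] forest_nonempty[OF assms(3,5)]]
      \<open>D \<notin> F\<close> by blast
  ultimately show False by simp
qed

lemma leq_card_inner_less:
  assumes "finite I" "leq I F G" "F \<noteq> G"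
  shows "card (inner F) < card (inner G)"
proof -
  obtain \<phi> where F: "forest I F" and G: "forest I G" and \<phi>: "morph F G \<phi>"
    using assms(2) unfolding leq_def by blast
  have image: "\<phi> ` inner F \<subseteq> inner G" using morph_inner[OF \<phi>] by blast
  have card_image: "card (\<phi> ` inner F) = card (inner F)"
    by (rule card_image[OF morph_inj_on_inner[OF \<phi>]])
  have "card (inner F) \<le> card (inner G)"
    using card_mono[OF finite_inner[OF assms(1) G] image] card_image by simp
  moreover have "card (inner F) \<noteq> card (inner G)"
  proof
    assume same_card: "card (inner F) = card (inner G)"
    then have onto: "\<phi> ` inner F = inner G"
      using card_subset_eq[OF finite_inner[OF assms(1) G] image] card_image by simp
    have "D \<in> F" if "D \<in> inner G" for D
    proof (rule morph_reflects_cluster[OF assms(1) F G \<phi>])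
      show "D \<in> G" using that by (simp add: inner_iff)
      show "inner_below G D \<subseteq> \<phi> ` inner F" unfolding onto inner_below_def by blast
    qed
    then have "inner G \<subseteq> inner F" by (auto simp: inner_iff)
    then have "inner G = inner F" using card_subset_eq[OF finite_inner[OF assms(1) F]] same_card by simp
    then show False
      using forest_eq_zero_Un_inner[OF assms(1) F] forest_eq_zero_Un_inner[OF assms(1) G] assms(3) by simp
  qed
  ultimately show ?thesis by simp
qed

section \<open>Atoms are cherries\<close>

definition cherry :: "'a set \<Rightarrow> 'a \<Rightarrow> 'a \<Rightarrow> 'a set set" where
  "cherry I u v = insert {u, v} (zero I)"

lemma cherry_forest:
  assumes "u \<in> I" "v \<in> I" "u \<noteq> v"
  shows "forest I (cherry I u v)"
proof -
  have "\<exists>B1\<in>cherry I u v. \<exists>B2\<in>cherry I u v. B1 \<noteq> {} \<and> B2 \<noteq> {} \<and> B1 \<inter> B2 = {} \<and> B1 \<union> B2 = {u, v}"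
    using assms unfolding cherry_def zero_def by blast
  moreover have "card A = 1" if "A \<in> zero I" for A using that unfolding zero_def by auto
  ultimately show ?thesis using assms unfolding forest_def cherry_def zero_def by auto
qed

lemma inner_cherry: "u \<noteq> v \<Longrightarrow> inner (cherry I u v) = {{u, v}}"
  unfolding cherry_def inner_def zero_def by auto

lemma morph_cherry_least_cluster:
  assumes "finite I" "forest I G" "u \<in> I" "v \<in> I" "u \<noteq> v" "C \<in> G" "{u, v} \<subseteq> C"
  shows "morph (cherry I u v) G (least_cluster G)"
  unfolding morph_def
proof (intro conjI ballI impI allI)
  fix A assume "A \<in> cherry I u v"
  then consider "A = {u, v}" | x where "x \<in> I" "A = {x}" unfolding cherry_def zero_def by blast
  then show "least_cluster G A \<in> G"
  proof cases
    case 1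
    then show ?thesis using least_cluster_mem[OF assms(1,2) _ assms(6,7)] by blast
  next
    case 2
    then show ?thesis by (simp add: forest_singleton[OF assms(2)] least_cluster_eq)
  qed
next
  fix A B assume "A \<in> cherry I u v" "B \<in> cherry I u v" "A \<subseteq> B"
  then show "least_cluster G A \<subseteq> least_cluster G B" by (intro least_cluster_mono)
next
  fix A assume "A \<in> inner (cherry I u v)"
  then show "least_cluster G A \<in> inner G"
    using least_cluster_pair_inner[OF assms(1,2,6,7,5)] inner_cherry[OF assms(5)] by simp
next
  show "inj_on (least_cluster G) (inner (cherry I u v))" using inner_cherry[OF assms(5)] by simp
next
  fix A assume "A \<in> cherry I u v" "card A = 1"
  then obtain x where "x \<in> I" "A = {x}" using assms(5) unfolding cherry_def zero_def by auto
  then show "least_cluster G A = A" by (simp add: forest_singleton[OF assms(2)] least_cluster_eq)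
next
  fix A B1 B2 D
  assume "B1 \<noteq> {} \<and> B2 \<noteq> {} \<and> B1 \<inter> B2 = {} \<and> B1 \<union> B2 = A"
    and "D \<in> G" "least_cluster G B1 \<union> least_cluster G B2 \<subseteq> D"
  then have "A \<subseteq> D" using subset_least_cluster[of B1 G] subset_least_cluster[of B2 G] by blast
  then show "least_cluster G A \<subseteq> D" using least_cluster_least[OF \<open>D \<in> G\<close>] by blast
qed

lemma leq_cherry_iff:
  assumes "finite I" "forest I G" "u \<in> I" "v \<in> I" "u \<noteq> v"
  shows "leq I (cherry I u v) G \<longleftrightarrow> (\<exists>C\<in>G. {u, v} \<subseteq> C)"
proof
  assume "leq I (cherry I u v) G"
  then obtain \<phi> where \<phi>: "morph (cherry I u v) G \<phi>" unfolding leq_def by blast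
  have pair: "{u, v} \<in> cherry I u v" unfolding cherry_def by simp
  then have "{u, v} \<subseteq> \<phi> {u, v}" by (rule morph_subset[OF cherry_forest[OF assms(3-5)] \<phi>])
  then show "\<exists>C\<in>G. {u, v} \<subseteq> C" using morph_mem[OF \<phi> pair] by blast
next
  assume "\<exists>C\<in>G. {u, v} \<subseteq> C"
  then show "leq I (cherry I u v) G"
    using morph_cherry_least_cluster[OF assms] cherry_forest[OF assms(3-5)] assms(2)
    unfolding leq_def by blast
qed

lemma lam_zero_cherry:
  assumes "finite I" "is_tree I T" "u \<in> I" "v \<in> I" "u \<noteq> v"
  shows "lam T lbl (zero I) (cherry I u v) = lbl (least_cluster T {u, v})"
proof -
  have T: "forest I T" "I \<in> T" using assms(2) unfolding is_tree_def by auto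
  have "morph (cherry I u v) T (least_cluster T)"
    using morph_cherry_least_cluster[OF assms(1) T(1) assms(3-5) T(2)] assms(3,4) by blast
  then have "vin T (cherry I u v) = {least_cluster T {u, v}}"
    using vin_eq[OF assms(1) cherry_forest[OF assms(3-5)]] inner_cherry[OF assms(5)] by simp
  then show ?thesis unfolding lam_def vin_zero[OF assms(1) T(1)] by simp
qed

lemma atom_cherryE:
  assumes "finite I" "atom I a"
  obtains u v where "u \<in> I" "v \<in> I" "u \<noteq> v" "a = cherry I u v"
proof -
  have zero_le: "leq I (zero I) a" and "zero I \<noteq> a"
    and no_between: "\<And>H. leq I (zero I) H \<Longrightarrow> leq I H a \<Longrightarrow> H = zero I \<or> H = a"
    using assms(2) unfolding atom_def covers_def by blast+
  have a: "forest I a" using zero_le unfolding leq_def by blast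
  have "inner a \<noteq> {}"
    using forest_eq_zero_Un_inner[OF assms(1) a] \<open>zero I \<noteq> a\<close> by auto
  then obtain A where A: "A \<in> inner a" and minimal: "\<And>B. B \<in> inner a \<Longrightarrow> card A \<le> card B"
    using ex_has_least_nat[of "\<lambda>A. A \<in> inner a" _ card] by blast
  have "A \<in> a" "2 \<le> card A" using A by (simp_all add: inner_iff)
  then obtain B1 B2 where B: "B1 \<in> a" "B2 \<in> a" "bipartition A B1 B2"
    by (rule forest_childrenE[OF a])
  have "finite A" using finite_forest_mem[OF assms(1) a \<open>A \<in> a\<close>] .
  have leaf: "\<exists>y\<in>I. B = {y}" if "B \<in> a" "card B < card A" for B
    using minimal[of B] that forest_leafE[OF assms(1) a that(1)] by (force simp: inner_iff)
  have "card B1 < card A" "card B2 < card A"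
    using bipartition_card_less[OF \<open>finite A\<close>] B(3) bipartition_commute by blast+
  then obtain u v where "u \<in> I" "v \<in> I" "B1 = {u}" "B2 = {v}"
    using leaf[OF B(1)] leaf[OF B(2)] by meson
  moreover from this have "u \<noteq> v" "A = {u, v}" using B(3) unfolding bipartition_def by auto
  moreover have "cherry I u v = a"
  proof -
    have "cherry I u v \<subseteq> a"
      using zero_subset_forest[OF a] A \<open>A = {u, v}\<close> unfolding cherry_def by (auto simp: inner_iff)
    then have "leq I (cherry I u v) a"
      unfolding leq_def using morph_id cherry_forest[OF \<open>u \<in> I\<close> \<open>v \<in> I\<close> \<open>u \<noteq> v\<close>] a by blast
    moreover have "leq I (zero I) (cherry I u v)"
      using zero_forest morph_id[OF zero_subset_forest] cherry_forest[OF \<open>u \<in> I\<close> \<open>v \<in> I\<close> \<open>u \<noteq> v\<close>]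
      unfolding leq_def by blast
    moreover have "inner (cherry I u v) \<noteq> inner (zero I)"
      using inner_cherry[OF \<open>u \<noteq> v\<close>] by (simp add: inner_zero)
    ultimately show ?thesis using no_between by fastforce
  qed
  ultimately show thesis using that by blast
qed

section \<open>The maximal chain with increasing labels\<close>

lemma strictly_increasing_into_interval:
  fixes f :: "nat \<Rightarrow> nat"
  assumes step: "\<And>i. Suc i < m \<Longrightarrow> f i < f (Suc i)"
    and range: "\<And>i. i < m \<Longrightarrow> c \<le> f i \<and> f i < c + m"
    and "i < m"
  shows "f i = c + i"
proof -
  have grow: "f j + (k - j) \<le> f k" if "j \<le> k" "k < m" for j k
    using that(1)
  proof (induction k rule: dec_induct)
    case (step k)
    then show ?case using assms(1)[of k] that(2) by simp
  qed simp
  have "f 0 + i \<le> f i" using grow[of 0 i] \<open>i < m\<close> by simp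
  moreover have "f i + (m - 1 - i) \<le> f (m - 1)" using grow[of i "m - 1"] \<open>i < m\<close> by simp
  ultimately show ?thesis using range[of 0] range[of "m - 1"] \<open>i < m\<close> by arith
qed

text \<open>The chain of the theorem, with the step from x i to x (Suc i) counted as step i + 1.\<close>

locale increasing_chain =
  fixes I :: "'a set" and T :: "'a set set" and lbl :: "'a set \<Rightarrow> nat"
    and x :: "nat \<Rightarrow> 'a set set" and n :: nat
  assumes finite_I: "finite I"
    and tree: "is_tree I T"
    and n_eq: "n = card (inner T)"
    and nice: "nice_order T lbl"
    and x_0: "x 0 = zero I"
    and x_n: "x n = T"
    and covers: "\<And>i. i < n \<Longrightarrow> covers I (x i) (x (Suc i))"
    and lam_less: "\<And>i j. i < j \<Longrightarrow> j < n \<Longrightarrow>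
      lam T lbl (x i) (x (Suc i)) < lam T lbl (x j) (x (Suc j))"
begin

lemma forest_T: "forest I T" and I_mem_T: "I \<in> T"
  using tree unfolding is_tree_def by auto

lemma lbl_range: "w \<in> inner T \<Longrightarrow> lbl w \<in> {1..n}"
  using nice n_eq unfolding nice_order_def bij_betw_def by blast

lemma lbl_inj: "inj_on lbl (inner T)"
  using nice unfolding nice_order_def bij_betw_def by blast

lemma lbl_mono: "v \<in> inner T \<Longrightarrow> w \<in> inner T \<Longrightarrow> v \<subseteq> w \<Longrightarrow> lbl v \<le> lbl w"
  using nice unfolding nice_order_def by blast

lemma leq_step: "i < n \<Longrightarrow> leq I (x i) (x (Suc i))"
  using covers unfolding covers_def by blast

lemma leq_x_T: "i \<le> n \<Longrightarrow> leq I (x i) T"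
proof (induction i rule: inc_induct)
  case base
  show ?case unfolding x_n leq_def using forest_T morph_id[of T T] by blast
next
  case (step i)
  then show ?case using leq_trans[OF finite_I leq_step] by blast
qed

lemma card_vin_x: "i \<le> n \<Longrightarrow> card (vin T (x i)) = i"
proof -
  have card_vin: "card (vin T (x i)) = card (inner (x i))" if "i \<le> n" for i
    using vin_subset_inner_card(2)[OF finite_I leq_x_T[OF that]] .
  have "card (vin T (x i)) = 0 + i" if "i < Suc n" for i
  proof (rule strictly_increasing_into_interval[where f = "\<lambda>i. card (vin T (x i))"])
    show "card (vin T (x j)) < card (vin T (x (Suc j)))" if "Suc j < Suc n" for j
      using leq_card_inner_less[OF finite_I leq_step] covers that card_vin
      unfolding covers_def by simp
    show "0 \<le> card (vin T (x j)) \<and> card (vin T (x j)) < 0 + Suc n" if "j < Suc n" for j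
      using card_mono[OF finite_inner[OF finite_I forest_T]
          vin_subset_inner_card(1)[OF finite_I leq_x_T]] that n_eq by (simp add: less_Suc_eq_le)
  qed (use that in simp)
  then show "i \<le> n \<Longrightarrow> card (vin T (x i)) = i" by simp
qed

lemma vin_x_SucE:
  assumes "i < n"
  obtains v where "v \<in> inner T" "vin T (x (Suc i)) = insert v (vin T (x i))"
    and "lam T lbl (x i) (x (Suc i)) = lbl v"
proof -
  have subset: "vin T (x i) \<subseteq> vin T (x (Suc i))"
    using vin_mono[OF finite_I leq_step[OF assms] leq_x_T] assms by simp
  have finite: "finite (vin T (x (Suc i)))"
    using finite_subset[OF vin_subset_inner_card(1)[OF finite_I leq_x_T] finite_inner[OF finite_I forest_T]]
      assms by simp
  have "card (vin T (x (Suc i)) - vin T (x i)) = 1"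
    using card_Diff_subset[OF finite_subset[OF subset finite] subset] card_vin_x assms by simp
  then obtain v where v: "vin T (x (Suc i)) - vin T (x i) = {v}" by (rule card_1_singletonE)
  then have "v \<in> inner T"
    using vin_subset_inner_card(1)[OF finite_I leq_x_T[of "Suc i"]] assms by auto
  moreover have "vin T (x (Suc i)) = insert v (vin T (x i))" using v subset by blast
  moreover have "lam T lbl (x i) (x (Suc i)) = lbl v" unfolding lam_def v by simp
  ultimately show thesis by (rule that)
qed

lemma lam_x:
  assumes "i < n"
  shows "lam T lbl (x i) (x (Suc i)) = Suc i"
proof -
  have "lam T lbl (x i) (x (Suc i)) = 1 + i"
  proof (rule strictly_increasing_into_interval[where f = "\<lambda>i. lam T lbl (x i) (x (Suc i))"])
    show "lam T lbl (x j) (x (Suc j)) < lam T lbl (x (Suc j)) (x (Suc (Suc j)))" if "Suc j < n" for j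
      using lam_less that by simp
    show "1 \<le> lam T lbl (x j) (x (Suc j)) \<and> lam T lbl (x j) (x (Suc j)) < 1 + n" if "j < n" for j
      by (rule vin_x_SucE[OF that]) (use lbl_range in fastforce)
  qed (rule assms)
  then show ?thesis by simp
qed

lemma vin_x_eq: "i \<le> n \<Longrightarrow> vin T (x i) = {w \<in> inner T. lbl w \<le> i}"
proof (induction i)
  case 0
  show ?case using vin_zero[OF finite_I forest_T] lbl_range by (fastforce simp: x_0)
next
  case (Suc i)
  then have "i < n" by simp
  then obtain v where v: "v \<in> inner T" "vin T (x (Suc i)) = insert v (vin T (x i))"
    and "lam T lbl (x i) (x (Suc i)) = lbl v"
    by (rule vin_x_SucE)
  with lam_x[OF \<open>i < n\<close>] have "lbl v = Suc i" by simp
  have "{w \<in> inner T. lbl w \<le> Suc i} = insert v {w \<in> inner T. lbl w \<le> i}"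
  proof (intro equalityI subsetI)
    fix w assume w: "w \<in> {w \<in> inner T. lbl w \<le> Suc i}"
    show "w \<in> insert v {w \<in> inner T. lbl w \<le> i}"
    proof (cases "lbl w = Suc i")
      case True
      then show ?thesis using inj_onD[OF lbl_inj, of w v] w v(1) \<open>lbl v = Suc i\<close> by simp
    qed (use w in auto)
  qed (use v(1) \<open>lbl v = Suc i\<close> in auto)
  then show ?case using Suc v(2) by simp
qed

lemma lower_labels_subset_x: "i \<le> n \<Longrightarrow> {w \<in> inner T. lbl w \<le> i} \<subseteq> x i"
proof
  fix w assume i: "i \<le> n" and "w \<in> {w \<in> inner T. lbl w \<le> i}"
  then have w: "w \<in> inner T" "lbl w \<le> i" by auto
  obtain \<phi> where x_i: "forest I (x i)" and \<phi>: "morph (x i) T \<phi>"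
    using leq_x_T[OF i] unfolding leq_def by blast
  show "w \<in> x i"
  proof (rule morph_reflects_cluster[OF finite_I x_i forest_T \<phi>])
    show "w \<in> T" using w(1) by (simp add: inner_iff)
    have "inner_below T w \<subseteq> {w \<in> inner T. lbl w \<le> i}"
      using lbl_mono w unfolding inner_below_def by fastforce
    then show "inner_below T w \<subseteq> \<phi> ` inner (x i)"
      using vin_x_eq[OF i] vin_eq[OF finite_I x_i \<phi>] by simp
  qed
qed

lemma cherry_leq_x_iff:
  assumes "u \<in> I" "v \<in> I" "u \<noteq> v" "i \<le> n"
  shows "leq I (cherry I u v) (x i) \<longleftrightarrow> lbl (least_cluster T {u, v}) \<le> i"
proof -
  obtain \<phi> where x_i: "forest I (x i)" and \<phi>: "morph (x i) T \<phi>"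
    using leq_x_T[OF assms(4)] unfolding leq_def by blast
  have uv_T: "{u, v} \<subseteq> I" using assms(1,2) by blast
  have lca: "least_cluster T {u, v} \<in> inner T"
    by (rule least_cluster_pair_inner[OF finite_I forest_T I_mem_T uv_T assms(3)])
  have "(\<exists>C\<in>x i. {u, v} \<subseteq> C) \<longleftrightarrow> lbl (least_cluster T {u, v}) \<le> i"
  proof
    assume "\<exists>C\<in>x i. {u, v} \<subseteq> C"
    then obtain C where C: "C \<in> x i" "{u, v} \<subseteq> C" by blast
    then have "C \<in> inner (x i)"
      using two_le_card[OF finite_forest_mem[OF finite_I x_i C(1)], of u v] assms(3) by (simp add: inner_iff)
    then have "\<phi> C \<in> vin T (x i)" using vin_eq[OF finite_I x_i \<phi>] by simp
    then have "\<phi> C \<in> inner T" "lbl (\<phi> C) \<le> i" using vin_x_eq[OF assms(4)] by auto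
    moreover have "least_cluster T {u, v} \<subseteq> \<phi> C"
      using least_cluster_least[OF morph_mem[OF \<phi> C(1)]] morph_subset[OF x_i \<phi> C(1)] C(2) by blast
    ultimately show "lbl (least_cluster T {u, v}) \<le> i" using lbl_mono[OF lca] by fastforce
  next
    assume "lbl (least_cluster T {u, v}) \<le> i"
    then have "least_cluster T {u, v} \<in> x i" using lower_labels_subset_x[OF assms(4)] lca by blast
    then show "\<exists>C\<in>x i. {u, v} \<subseteq> C" using subset_least_cluster[of "{u, v}" T] by blast
  qed
  then show ?thesis using leq_cherry_iff[OF finite_I x_i assms(1-3)] by simp
qed

lemma atom_new_at_step_iff:
  assumes "i < n" "atom I a"
  shows "leq I a (x (Suc i)) \<and> \<not> leq I a (x i) \<longleftrightarrow> leq I a T \<and> lam T lbl (zero I) a = Suc i"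
proof -
  obtain u v where uv: "u \<in> I" "v \<in> I" "u \<noteq> v" and a: "a = cherry I u v"
    by (rule atom_cherryE[OF finite_I assms(2)])
  have "leq I a T" unfolding a leq_cherry_iff[OF finite_I forest_T uv] using uv I_mem_T by blast
  moreover have "lam T lbl (zero I) a = lbl (least_cluster T {u, v})"
    unfolding a by (rule lam_zero_cherry[OF finite_I tree uv])
  ultimately show ?thesis
    unfolding a using cherry_leq_x_iff[OF uv] assms(1) by auto
qed

end

theorem lemma5p5:
  fixes I :: "'a set" and T :: "'a set set" and lbl :: "'a set \<Rightarrow> nat"
    and x :: "nat \<Rightarrow> 'a set set" and n :: nat
  assumes "finite I"
    and "is_tree I T"
    and "n = card (inner T)"
    and "nice_order T lbl"
    and "x 0 = zero I"
    and "x n = T"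
    and "\<forall>i\<in>{1..n}. covers I (x (i - 1)) (x i)"
    and "\<forall>i j. 1 \<le> i \<and> i < j \<and> j \<le> n \<longrightarrow>
           lam T lbl (x (i - 1)) (x i) < lam T lbl (x (j - 1)) (x j)"
  shows "\<forall>i\<in>{1..n}.
           {a. atom I a \<and> leq I a (x i) \<and> \<not> leq I a (x (i - 1))} =
           {a. atom I a \<and> leq I a T \<and> lam T lbl (zero I) a = i}"
proof -
  interpret increasing_chain I T lbl x n
  proof
    show "covers I (x i) (x (Suc i))" if "i < n" for i
      using assms(7)[rule_format, of "Suc i"] that by simp
    show "lam T lbl (x i) (x (Suc i)) < lam T lbl (x j) (x (Suc j))" if "i < j" "j < n" for i j
      using assms(8)[rule_format, of "Suc i" "Suc j"] that by simp
  qed (use assms in simp_all)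
  show ?thesis
  proof
    fix i assume "i \<in> {1..n}"
    then obtain k where "i = Suc k" "k < n" by (cases i) auto
    then show "{a. atom I a \<and> leq I a (x i) \<and> \<not> leq I a (x (i - 1))} =
        {a. atom I a \<and> leq I a T \<and> lam T lbl (zero I) a = i}"
      using atom_new_at_step_iff by auto
  qed
qed

end
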